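(* Let the spot price $\pi$ have CDF $F_{\pi}$ and monotonically decreasing density $f_{\pi}$ on $[\underline{\pi},\bar{\pi}]$ with $0\le\underline{\pi}<\bar{\pi}$, and let $t_k,t_e,t_s,t_r>0$ with $\frac{t_e}{2}<t_s\le t_e$. Consider the problem (P3): minimize over $(q,p)$ $$\Phi_3(p,q)=q\,t_e\bar{\pi}+\frac{(1-q)t_e}{1-\frac{t_r}{t_k}(1-F_{\pi}(p))}\cdot\frac{\int_{\underline{\pi}}^{p}x f_{\pi}(x)\,dx}{F_{\pi}(p)}$$ subject to $q t_e\le t_s$, $\;\underline{\pi}\le p\le\bar{\pi}$, $\;0\le q\le 1$, $$\frac{(1-q)t_e}{1-\frac{t_r}{t_k}(1-F_{\pi}(p))}\cdot\frac{1}{F_{\pi}(p)}\le t_s,\qquad t_r<\frac{t_k}{2(1-F_{\pi}(p))}.$$ Then the optimal bid price is $p^*=\bar{\pi}$ and the optimal fraction of the job run on the on-demand instance is $q^*=1-\frac{t_s}{t_e}$.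
   Context: Model (persistent request): a user runs a fraction $q$ of a job (execution time $t_e$, deadline $t_s$) on an on-demand instance at price $\bar{\pi}$ and the rest on a spot instance with bid $p$, where an interrupted job resumes when the bid again exceeds the spot price, incurring a recovery time $t_r$ per resumption; spot prices in slots of length $t_k$ are i.i.d. with CDF $F_{\pi}$ and monotonically decreasing density $f_{\pi}$ on $[\underline{\pi},\bar{\pi}]$. *)

theory Defs
  imports "HOL-Analysis.Analysis"
begin

definition Phi3 ::
  "(real \<Rightarrow> real) \<Rightarrow> (real \<Rightarrow> real) \<Rightarrow> real \<Rightarrow> real \<Rightarrow> real \<Rightarrow> real \<Rightarrow> real \<Rightarrow> real \<Rightarrow> real \<Rightarrow> real" where
  "Phi3 F f lo hi tk te tr p q =
     q * te * hi
     + ((1 - q) * te / (1 - tr / tk * (1 - F p)))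
       * (integral {lo..p} (\<lambda>x. x * f x) / F p)"

text \<open>The constraint involving 1/F(p) is only meaningful
  for F(p) > 0 (for F(p) = 0 its left side is +infinity, i.e. infeasible), and the
  constraint t_r < t_k / (2 (1 - F(p))) is written multiplied out, so that it
  reads as the vacuous condition t_r < +infinity when F(p) = 1.\<close>
definition feasible3 ::
  "(real \<Rightarrow> real) \<Rightarrow> real \<Rightarrow> real \<Rightarrow> real \<Rightarrow> real \<Rightarrow> real \<Rightarrow> real \<Rightarrow> real \<Rightarrow> real \<Rightarrow> bool" where
  "feasible3 F lo hi tk te ts tr p q \<longleftrightarrow>
     q * te \<le> ts \<and> lo \<le> p \<and> p \<le> hi \<and> 0 \<le> q \<and> q \<le> 1 \<and>
     F p > 0 \<and>
     ((1 - q) * te / (1 - tr / tk * (1 - F p))) * (1 / F p) \<le> ts \<and>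
     tr * (2 * (1 - F p)) < tk"

end

theory Submission
  imports Defs
begin

text \<open>Write \<open>c = (1 - q) t\<^sub>e / (D F(p))\<close> for the expected spot running time, where
  \<open>D = 1 - t\<^sub>r/t\<^sub>k (1 - F(p))\<close>. Since \<open>q t\<^sub>e = t\<^sub>e - c D F(p)\<close>, the cost is
  \<open>t\<^sub>e \<pi>\<^sub>h\<^sub>i - c (D F(p) \<pi>\<^sub>h\<^sub>i - \<integral>\<^sub>l\<^sub>o\<^sup>p x f)\<close>: the on-demand cost of the whole job minus
  the spot time times the saving per unit of spot time. The deadline constraint gives
  \<open>c \<le> t\<^sub>s\<close>, and as \<open>D \<le> 1\<close> the saving is at most \<open>\<integral>\<^sub>l\<^sub>o\<^sup>p (\<pi>\<^sub>h\<^sub>i - x) f \<le> \<integral>\<^sub>l\<^sub>o\<^sup>h\<^sup>i (\<pi>\<^sub>h\<^sub>i - x) f\<close>.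
  Both bounds are attained at \<open>p = \<pi>\<^sub>h\<^sub>i\<close>, \<open>q = 1 - t\<^sub>s/t\<^sub>e\<close>.\<close>

lemma absolutely_integrable_continuous_mult:
  fixes f g :: "real \<Rightarrow> real"
  assumes "continuous_on {a..b} g" and "f absolutely_integrable_on {a..b}"
  shows "(\<lambda>x. g x * f x) absolutely_integrable_on {a..b}"
proof (rule absolutely_integrable_bounded_measurable_product_real[OF _ _ _ assms(2)])
  show "g \<in> borel_measurable (lebesgue_on {a..b})"
    using assms(1) by (simp add: continuous_imp_measurable_on_sets_lebesgue)
  show "bounded (g ` {a..b})"
    using assms(1) by (simp add: compact_continuous_image compact_imp_bounded)
qed simp

lemma integral_weighted_upper_gap_le:
  fixes f :: "real \<Rightarrow> real"
  assumes nonneg: "\<forall>x\<in>{a..b}. 0 \<le> f x" and f: "f integrable_on {a..b}"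
    and p: "a \<le> p" "p \<le> b"
  shows "b * integral {a..p} f - integral {a..p} (\<lambda>x. x * f x)
           \<le> b * integral {a..b} f - integral {a..b} (\<lambda>x. x * f x)"
    and "0 \<le> b * integral {a..b} f - integral {a..b} (\<lambda>x. x * f x)"
proof -
  have "f absolutely_integrable_on {a..b}"
    using nonnegative_absolutely_integrable_1[OF f] nonneg by blast
  then have xf: "(\<lambda>x. x * f x) integrable_on {a..b}"
    using absolutely_integrable_continuous_mult[of a b "\<lambda>x. x" f]
    by (auto simp: absolutely_integrable_on_def)
  have gap: "integral {a..s} (\<lambda>x. (b - x) * f x)
               = b * integral {a..s} f - integral {a..s} (\<lambda>x. x * f x)"
    if "s \<le> b" for s
  proof -
    have "{a..s} \<subseteq> {a..b}" using that by auto
    then have "f integrable_on {a..s}" "(\<lambda>x. x * f x) integrable_on {a..s}"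
      using f xf integrable_subinterval_real by blast+
    from integral_diff[OF integrable_on_cmult_left[OF this(1), of b] this(2)]
    show ?thesis by (simp add: left_diff_distrib)
  qed
  have g: "(\<lambda>x. (b - x) * f x) integrable_on {a..b}"
    using integrable_diff[OF integrable_on_cmult_left[OF f, of b] xf]
    by (simp add: left_diff_distrib)
  have "integral {a..p} (\<lambda>x. (b - x) * f x) \<le> integral {a..b} (\<lambda>x. (b - x) * f x)"
    using p nonneg
    by (intro integral_subset_le integrable_subinterval_real[OF g]) auto
  then show "b * integral {a..p} f - integral {a..p} (\<lambda>x. x * f x)
               \<le> b * integral {a..b} f - integral {a..b} (\<lambda>x. x * f x)"
    using gap p by simp
  have "0 \<le> integral {a..b} (\<lambda>x. (b - x) * f x)"
    using nonneg by (intro integral_nonneg[OF g]) auto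
  then show "0 \<le> b * integral {a..b} f - integral {a..b} (\<lambda>x. x * f x)"
    using gap by simp
qed

lemma Phi3_eq_on_demand_minus_saving:
  assumes "D = 1 - tr / tk * (1 - F p)" and "D \<noteq> 0" and "F p \<noteq> 0"
  shows "Phi3 F f lo hi tk te tr p q
           = te * hi - (1 - q) * te / D / F p * (D * F p * hi - integral {lo..p} (\<lambda>x. x * f x))"
  unfolding Phi3_def assms(1)[symmetric] using assms(2,3) by (simp add: field_simps)

lemma feasible3_Phi3_ge:
  assumes feas: "feasible3 F lo hi tk te ts tr p q"
    and "0 < tk" "0 < tr" "0 < te" "0 \<le> hi" "F p \<le> 1"
    and saving: "F p * hi - integral {lo..p} (\<lambda>x. x * f x) \<le> S" and "0 \<le> S"
  shows "te * hi - ts * S \<le> Phi3 F f lo hi tk te tr p q"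
proof -
  define D where "D = 1 - tr / tk * (1 - F p)"
  define c where "c = (1 - q) * te / D / F p"
  have Fp: "0 < F p" and q: "q \<le> 1"
    and deadline: "(1 - q) * te / D * (1 / F p) \<le> ts"
    and recovery: "tr * (2 * (1 - F p)) < tk"
    using feas unfolding feasible3_def D_def by auto
  have c_le: "c \<le> ts" using deadline by (simp add: c_def)
  have "tr / tk * (1 - F p) < 1 / 2" using recovery \<open>0 < tk\<close> by (simp add: field_simps)
  then have D_pos: "0 < D" unfolding D_def by linarith
  have D_le: "D \<le> 1" unfolding D_def using assms(2,3,6) by simp
  have c: "0 \<le> c" unfolding c_def using Fp D_pos q \<open>0 < te\<close> by simp
  have "D * F p * hi \<le> F p * hi"
    using D_pos D_le Fp \<open>0 \<le> hi\<close> by (simp add: mult_left_le_one_le)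
  then have "D * F p * hi - integral {lo..p} (\<lambda>x. x * f x) \<le> S"
    using saving by linarith
  then have "c * (D * F p * hi - integral {lo..p} (\<lambda>x. x * f x)) \<le> c * S"
    using c by (rule mult_left_mono)
  also have "\<dots> \<le> ts * S"
    using c_le \<open>0 \<le> S\<close> by (rule mult_right_mono)
  finally have "c * (D * F p * hi - integral {lo..p} (\<lambda>x. x * f x)) \<le> ts * S" .
  moreover have "Phi3 F f lo hi tk te tr p q
                   = te * hi - c * (D * F p * hi - integral {lo..p} (\<lambda>x. x * f x))"
    using Phi3_eq_on_demand_minus_saving[of D tr tk F p, OF D_def] Fp D_pos unfolding c_def by simp
  ultimately show ?thesis by linarith
qed

theorem proposition3:
  fixes f F :: "real \<Rightarrow> real" and lo hi tk te ts tr :: real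
  assumes "0 \<le> lo" and "lo < hi"
    and "\<forall>x\<in>{lo..hi}. 0 \<le> f x"
    and "f integrable_on {lo..hi}"
    and "integral {lo..hi} f = 1"
    and "\<forall>x\<in>{lo..hi}. \<forall>y\<in>{lo..hi}. x \<le> y \<longrightarrow> f y \<le> f x"
    and "\<forall>x\<in>{lo..hi}. F x = integral {lo..x} f"
    and "tk > 0" and "te > 0" and "ts > 0" and "tr > 0"
    and "te / 2 < ts" and "ts \<le> te"
  shows "feasible3 F lo hi tk te ts tr hi (1 - ts / te) \<and>
         (\<forall>p q. feasible3 F lo hi tk te ts tr p q \<longrightarrow>
            Phi3 F f lo hi tk te tr hi (1 - ts / te) \<le> Phi3 F f lo hi tk te tr p q)"
proof (intro conjI allI impI)
  define S where "S = hi - integral {lo..hi} (\<lambda>x. x * f x)"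
  have F_hi: "F hi = 1" using assms(2,5,7) by simp
  have "0 \<le> 1 - ts / te" "(1 - ts / te) * te \<le> ts"
    using assms(9,10,12,13) by (simp_all add: field_simps)
  then show "feasible3 F lo hi tk te ts tr hi (1 - ts / te)"
    unfolding feasible3_def using F_hi assms(2,8-12) by (simp add: field_simps)
  fix p q
  assume feas: "feasible3 F lo hi tk te ts tr p q"
  then have p: "lo \<le> p" "p \<le> hi" unfolding feasible3_def by auto
  have "integral {lo..p} f \<le> integral {lo..hi} f"
    using p assms(3) by (intro integral_subset_le integrable_subinterval_real[OF assms(4)] assms(4)) auto
  then have "F p \<le> 1" using p assms(5,7) by simp
  moreover have "F p * hi - integral {lo..p} (\<lambda>x. x * f x) \<le> S" "0 \<le> S"
    using integral_weighted_upper_gap_le[OF assms(3,4) p] assms(5,7) p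
    unfolding S_def by (simp_all add: mult.commute)
  ultimately have "te * hi - ts * S \<le> Phi3 F f lo hi tk te tr p q"
    using feasible3_Phi3_ge[OF feas] assms(1,2,8,9,11) by simp
  moreover have "Phi3 F f lo hi tk te tr hi (1 - ts / te) = te * hi - ts * S"
    unfolding Phi3_def S_def using F_hi assms(9) by (simp add: field_simps)
  ultimately show "Phi3 F f lo hi tk te tr hi (1 - ts / te) \<le> Phi3 F f lo hi tk te tr p q"
    by simp
qed

end
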